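(* Every finite graph is isomorphic to an induced subgraph of the enhanced power graph of some finite group, and this group can be taken to be abelian.
   Context: The enhanced power graph of a group $G$ has vertex set $G$, distinct $x,y$ adjacent iff $\langle x,y\rangle$ is cyclic. *)

theory Defs
  imports "HOL-Algebra.Elementary_Groups"
begin

definition simple_graph :: "'v set \<Rightarrow> ('v \<Rightarrow> 'v \<Rightarrow> bool) \<Rightarrow> bool" where
  "simple_graph V E \<longleftrightarrow> (\<forall>u v. E u v \<longrightarrow> u \<in> V \<and> v \<in> V \<and> u \<noteq> v \<and> E v u)"

definition enh_power_adj :: "('a, 'b) monoid_scheme \<Rightarrow> 'a \<Rightarrow> 'a \<Rightarrow> bool" where
  "enh_power_adj G x y \<longleftrightarrow>
     x \<in> carrier G \<and> y \<in> carrier G \<and> x \<noteq> y \<and> cyclic_group (subgroup_generated G {x, y})"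

definition induced_subgraph_of_enh_power_graph ::
  "'v set \<Rightarrow> ('v \<Rightarrow> 'v \<Rightarrow> bool) \<Rightarrow> ('a, 'b) monoid_scheme \<Rightarrow> bool" where
  "induced_subgraph_of_enh_power_graph V E G \<longleftrightarrow>
     (\<exists>f. f ` V \<subseteq> carrier G \<and> inj_on f V \<and>
          (\<forall>u\<in>V. \<forall>v\<in>V. E u v \<longleftrightarrow> enh_power_adj G (f u) (f v)))"

end

theory Submission
  imports Defs "HOL-Number_Theory.Cong" "HOL-Algebra.Multiplicative_Group"
begin

(* Let M be a product of distinct primes p_i, one for every vertex w (making the embedding
   injective) and one for every ordered pair (a, b) of distinct non-adjacent vertices.
   In (Z/M)^2, the product of the groups (Z/p_i)^2, send the vertex u to the element x_u whose
   i-th component is (delta_uw, 0) for i = w and (delta_ua, delta_ub) for i = (a, b).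
   If x_u and x_v generate a cyclic group, they are multiples of one element, so their
   determinant vanishes modulo M; for a non-edge (u, v) it is 1 modulo p_(u,v).
   Adjacent u and v, on the other hand, have disjoint supports; hence the k in Z/M that is 1 on
   the support of x_u and 0 elsewhere satisfies k x_u = x_u and k x_v = 0, so that x_u + x_v
   generates both x_u and x_v. *)

definition mod_pair :: "nat \<Rightarrow> nat \<Rightarrow> nat \<Rightarrow> nat" where
  "mod_pair M a b = (a mod M) * M + b mod M"

(* The group (Z/M)^2, with the residue pair (a, b) stored as a * M + b. *)
definition mod_pair_group :: "nat \<Rightarrow> nat monoid" where
  "mod_pair_group M = \<lparr>carrier = {..<M * M},
     monoid.mult = (\<lambda>x y. mod_pair M (x div M + y div M) (x mod M + y mod M)), one = 0\<rparr>"

lemma mod_pair_div [simp]: "0 < M \<Longrightarrow> mod_pair M a b div M = a mod M"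
  by (simp add: mod_pair_def)

lemma mod_pair_mod [simp]: "0 < M \<Longrightarrow> mod_pair M a b mod M = b mod M"
  by (simp add: mod_pair_def)

lemma mod_pair_less: "0 < M \<Longrightarrow> mod_pair M a b < M * M"
proof -
  assume "0 < M"
  then have "mod_pair M a b < (a mod M) * M + M" by (simp add: mod_pair_def)
  also have "\<dots> \<le> M * M"
    using \<open>0 < M\<close> by (metis add.commute mod_less_divisor mult_Suc Suc_leI mult_le_mono1)
  finally show ?thesis .
qed

lemma mod_pair_div_mod: "x < M * M \<Longrightarrow> mod_pair M (x div M) (x mod M) = x"
  by (simp add: mod_pair_def less_mult_imp_div_less)

lemma mod_pair_eq_iff:
  "0 < M \<Longrightarrow> mod_pair M a b = mod_pair M c d \<longleftrightarrow> [a = c] (mod M) \<and> [b = d] (mod M)"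
  by (metis mod_pair_def mod_pair_div mod_pair_mod cong_def)

lemma mod_pair_group_simps:
  "carrier (mod_pair_group M) = {..<M * M}" "\<one>\<^bsub>mod_pair_group M\<^esub> = 0"
  "x \<otimes>\<^bsub>mod_pair_group M\<^esub> y = mod_pair M (x div M + y div M) (x mod M + y mod M)"
  by (simp_all add: mod_pair_group_def)

lemma one_mod_pair_group: "\<one>\<^bsub>mod_pair_group M\<^esub> = mod_pair M 0 0"
  by (simp add: mod_pair_group_def mod_pair_def)

lemma mult_mod_pair:
  "0 < M \<Longrightarrow> mod_pair M a b \<otimes>\<^bsub>mod_pair_group M\<^esub> mod_pair M c d = mod_pair M (a + c) (b + d)"
  by (simp add: mod_pair_group_simps mod_pair_eq_iff cong_def mod_add_eq)

lemma mod_pair_group_carrier_cases: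
  assumes "x \<in> carrier (mod_pair_group M)"
  obtains a b where "x = mod_pair M a b"
  using assms mod_pair_div_mod by (metis mod_pair_group_simps(1) lessThan_iff)

lemma comm_group_mod_pair_group:
  assumes "0 < M" shows "comm_group (mod_pair_group M)"
proof (rule comm_groupI)
  fix x y z
  assume "x \<in> carrier (mod_pair_group M)" "y \<in> carrier (mod_pair_group M)"
    and "z \<in> carrier (mod_pair_group M)"
  then obtain a b c d e f where "x = mod_pair M a b" "y = mod_pair M c d" "z = mod_pair M e f"
    by (metis mod_pair_group_carrier_cases)
  then show "x \<otimes>\<^bsub>mod_pair_group M\<^esub> y \<in> carrier (mod_pair_group M)"
    and "x \<otimes>\<^bsub>mod_pair_group M\<^esub> y = y \<otimes>\<^bsub>mod_pair_group M\<^esub> x"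
    and "x \<otimes>\<^bsub>mod_pair_group M\<^esub> y \<otimes>\<^bsub>mod_pair_group M\<^esub> z =
         x \<otimes>\<^bsub>mod_pair_group M\<^esub> (y \<otimes>\<^bsub>mod_pair_group M\<^esub> z)"
    using assms by (simp_all add: mult_mod_pair mod_pair_less mod_pair_group_simps(1) add_ac)
next
  show "\<one>\<^bsub>mod_pair_group M\<^esub> \<in> carrier (mod_pair_group M)"
    using assms by (simp add: mod_pair_group_simps)
next
  fix x assume "x \<in> carrier (mod_pair_group M)"
  then obtain a b where x: "x = mod_pair M a b" by (rule mod_pair_group_carrier_cases)
  then show "\<one>\<^bsub>mod_pair_group M\<^esub> \<otimes>\<^bsub>mod_pair_group M\<^esub> x = x"
    using assms by (simp add: one_mod_pair_group mult_mod_pair)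
  have "(M - 1) * n + n = M * n" for n
    using assms by (cases M) simp_all
  then have "mod_pair M ((M - 1) * a) ((M - 1) * b) \<otimes>\<^bsub>mod_pair_group M\<^esub> x =
             \<one>\<^bsub>mod_pair_group M\<^esub>"
    using assms by (simp add: x one_mod_pair_group mult_mod_pair mod_pair_eq_iff cong_def)
  then show "\<exists>y\<in>carrier (mod_pair_group M). y \<otimes>\<^bsub>mod_pair_group M\<^esub> x = \<one>\<^bsub>mod_pair_group M\<^esub>"
    using assms mod_pair_less unfolding mod_pair_group_simps(1) by blast
qed

lemma pow_mod_pair:
  assumes "0 < M"
  shows "mod_pair M a b [^]\<^bsub>mod_pair_group M\<^esub> n = mod_pair M (n * a) (n * b)"
proof (induction n)
  case 0
  then show ?case by (simp add: one_mod_pair_group)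
next
  case (Suc n)
  then show ?case using assms by (simp add: mult_mod_pair add_ac)
qed

lemma (in comm_group) cyclic_subgroup_generated_pair:
  assumes x: "x \<in> carrier G" and y: "y \<in> carrier G"
    and "x [^] (k::nat) = x" "y [^] k = \<one>"
  shows "cyclic_group (subgroup_generated G {x, y})"
proof -
  define g where "g = x \<otimes> y"
  have g: "g \<in> carrier G" using x y by (simp add: g_def)
  have "g [^] k = x"
    using assms by (simp add: g_def nat_pow_distrib)
  moreover have "g [^] k \<in> generate G {g}"
    using g generate_pow[OF g] int_pow_int[where x = g and n = k, symmetric] by blast
  ultimately have x_gen: "x \<in> generate G {g}" by simp
  have "y = inv x \<otimes> g"
    using x y by (simp add: g_def inv_solve_left)
  then have y_gen: "y \<in> generate G {g}"
    using x_gen x g by (simp add: generate.incl generate_m_inv_closed generate.eng)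
  have g_gen: "g \<in> generate G {x, y}"
    by (simp add: g_def generate.incl generate.eng)
  have "generate G {x, y} = generate G {g}"
  proof
    show "generate G {x, y} \<subseteq> generate G {g}"
      using x_gen y_gen g by (simp add: generate_subgroup_incl generate_is_subgroup)
    show "generate G {g} \<subseteq> generate G {x, y}"
      using g_gen x y by (simp add: generate_subgroup_incl generate_is_subgroup)
  qed
  then have "subgroup_generated G {x, y} = subgroup_generated G {g}"
    using x y g by (simp add: subgroup_generated_def Int_absorb1)
  then show ?thesis
    by (simp add: cyclic_group_generated)
qed

lemma (in group) cyclic_subgroup_generated_imp_pow:
  assumes "finite (carrier G)" "S \<subseteq> carrier G" "cyclic_group (subgroup_generated G S)"
  shows "\<exists>g \<in> carrier G. \<forall>s \<in> S. \<exists>n::nat. s = g [^] n"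
proof -
  let ?H = "subgroup_generated G S"
  interpret H: group ?H by (rule group_subgroup_generated)
  obtain g where g: "g \<in> carrier ?H" "subgroup_generated ?H {g} = ?H"
    using assms(3) unfolding cyclic_group_def by blast
  have fin: "finite (carrier ?H)"
    using assms(1) carrier_subgroup_generated_subset finite_subset by blast
  have "carrier ?H = carrier (subgroup_generated ?H {g})"
    using g(2) by simp
  also have "\<dots> = generate ?H {g}"
    using g(1) by (simp add: carrier_subgroup_generated Int_absorb1)
  also have "\<dots> = {g [^]\<^bsub>?H\<^esub> n | n::nat. n \<in> UNIV}"
    by (rule H.generate_pow_on_finite_carrier[OF fin g(1)])
  finally have "carrier ?H = {g [^]\<^bsub>?H\<^esub> n | n::nat. n \<in> UNIV}" .
  moreover have "S \<subseteq> carrier ?H"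
    using assms(2) by (auto simp: carrier_subgroup_generated intro: generate.incl)
  ultimately have "\<forall>s \<in> S. \<exists>n::nat. s = g [^] n"
    by (auto simp: pow_subgroup_generated)
  moreover have "g \<in> carrier G"
    using g(1) carrier_subgroup_generated_subset by blast
  ultimately show ?thesis by blast
qed

lemma cyclic_mod_pairI:
  assumes "0 < M"
    and "[k * a = a] (mod M)" "[k * b = b] (mod M)" "[k * c = 0] (mod M)" "[k * d = 0] (mod M)"
  shows "cyclic_group (subgroup_generated (mod_pair_group M) {mod_pair M a b, mod_pair M c d})"
proof -
  interpret comm_group "mod_pair_group M" by (rule comm_group_mod_pair_group[OF assms(1)])
  show ?thesis
    by (rule cyclic_subgroup_generated_pair[of _ _ k])
       (use assms in \<open>simp_all add: mod_pair_group_simps(1) mod_pair_less pow_mod_pair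
                                       one_mod_pair_group mod_pair_eq_iff\<close>)
qed

lemma cyclic_mod_pair_imp_cong:
  assumes "0 < M"
    and "cyclic_group (subgroup_generated (mod_pair_group M) {mod_pair M a b, mod_pair M c d})"
  shows "[a * d = c * b] (mod M)"
proof -
  interpret comm_group "mod_pair_group M" by (rule comm_group_mod_pair_group[OF assms(1)])
  have "finite (carrier (mod_pair_group M))" by (simp add: mod_pair_group_simps)
  moreover have "{mod_pair M a b, mod_pair M c d} \<subseteq> carrier (mod_pair_group M)"
    using assms(1) by (simp add: mod_pair_group_simps mod_pair_less)
  ultimately obtain g n1 n2 where g: "g \<in> carrier (mod_pair_group M)"
    and "mod_pair M a b = g [^]\<^bsub>mod_pair_group M\<^esub> (n1::nat)"
    and "mod_pair M c d = g [^]\<^bsub>mod_pair_group M\<^esub> (n2::nat)"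
    using cyclic_subgroup_generated_imp_pow assms(2) by (metis insertCI)
  moreover obtain g1 g2 where "g = mod_pair M g1 g2"
    using g by (rule mod_pair_group_carrier_cases)
  ultimately have "[a = n1 * g1] (mod M)" "[b = n1 * g2] (mod M)"
    "[c = n2 * g1] (mod M)" "[d = n2 * g2] (mod M)"
    using assms(1) by (simp_all add: pow_mod_pair mod_pair_eq_iff)
  then have "[a * d = (n1 * g1) * (n2 * g2)] (mod M)" "[c * b = (n2 * g1) * (n1 * g2)] (mod M)"
    by (simp_all add: cong_mult)
  then show ?thesis
    by (metis cong_sym cong_trans mult.commute mult.left_commute)
qed

lemma cong_prod_iff_nat:
  fixes m :: "'i \<Rightarrow> nat"
  assumes "finite A" "\<forall>i\<in>A. \<forall>j\<in>A. i \<noteq> j \<longrightarrow> coprime (m i) (m j)"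
  shows "[x = y] (mod (\<Prod>i\<in>A. m i)) \<longleftrightarrow> (\<forall>i\<in>A. [x = y] (mod m i))"
  using assms coprime_cong_prod_nat[of A m x y] cong_dvd_modulus_nat dvd_prodI by metis

lemma ex_inj_on_prime:
  assumes "finite A"
  shows "\<exists>p. inj_on p A \<and> (\<forall>i\<in>A. prime (p i :: nat))"
proof -
  obtain B where B: "B \<subseteq> {p::nat. prime p}" "finite B" "card B = card A"
    using infinite_arbitrarily_large[OF primes_infinite] by blast
  obtain p where "bij_betw p A B"
    using finite_same_card_bij[OF assms B(2) B(3)[symmetric]] by blast
  then show ?thesis
    using B(1) by (auto simp: bij_betw_def)
qed

locale prime_residues =
  fixes I :: "'i set" and p :: "'i \<Rightarrow> nat"
  assumes finite_I: "finite I" and inj_p: "inj_on p I" and prime_p: "\<And>i. i \<in> I \<Longrightarrow> prime (p i)"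
begin

definition modulus :: nat where
  "modulus = (\<Prod>i\<in>I. p i)"

lemma pairwise_coprime_p: "\<forall>i\<in>I. \<forall>j\<in>I. i \<noteq> j \<longrightarrow> coprime (p i) (p j)"
  using inj_p prime_p by (metis inj_on_def primes_coprime)

lemma modulus_pos: "0 < modulus"
  unfolding modulus_def using finite_I prime_p by (simp add: prime_gt_0_nat prod_pos)

lemma cong_modulus_iff: "[x = y] (mod modulus) \<longleftrightarrow> (\<forall>i\<in>I. [x = y] (mod p i))"
  unfolding modulus_def by (rule cong_prod_iff_nat[OF finite_I pairwise_coprime_p])

definition crt_indicator :: "('i \<Rightarrow> bool) \<Rightarrow> nat" where
  "crt_indicator P = (SOME x. \<forall>i\<in>I. [x = of_bool (P i)] (mod p i))"

lemma crt_indicator_cong: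
  assumes "i \<in> I" shows "[crt_indicator P = of_bool (P i)] (mod p i)"
proof -
  have "\<exists>x. \<forall>i\<in>I. [x = of_bool (P i)] (mod p i)"
    by (rule chinese_remainder_nat[OF finite_I pairwise_coprime_p])
  then have "\<forall>i\<in>I. [crt_indicator P = of_bool (P i)] (mod p i)"
    unfolding crt_indicator_def by (rule someI_ex)
  then show ?thesis using assms by blast
qed

lemma crt_indicator_mult_cong_prime:
  "i \<in> I \<Longrightarrow> [crt_indicator P * crt_indicator Q = of_bool (P i \<and> Q i)] (mod p i)"
  unfolding of_bool_conj by (intro cong_mult crt_indicator_cong)

lemma crt_indicator_mult:
  assumes "\<And>i. i \<in> I \<Longrightarrow> P i \<and> Q i \<longleftrightarrow> R i"
  shows "[crt_indicator P * crt_indicator Q = crt_indicator R] (mod modulus)"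
proof -
  have "[crt_indicator P * crt_indicator Q = crt_indicator R] (mod p i)" if "i \<in> I" for i
  proof -
    have "[crt_indicator P * crt_indicator Q = of_bool (R i)] (mod p i)"
      using crt_indicator_mult_cong_prime[OF that, of P Q] assms[OF that] by simp
    then show ?thesis
      using cong_sym[OF crt_indicator_cong[OF that]] by (rule cong_trans)
  qed
  then show ?thesis by (simp add: cong_modulus_iff)
qed

lemma crt_indicator_mult_eq_0:
  assumes "\<And>i. i \<in> I \<Longrightarrow> \<not> (P i \<and> Q i)"
  shows "[crt_indicator P * crt_indicator Q = 0] (mod modulus)"
proof -
  have "[crt_indicator P * crt_indicator Q = 0] (mod p i)" if "i \<in> I" for i
    using crt_indicator_mult_cong_prime[OF that, of P Q] assms[OF that] by simp
  then show ?thesis by (simp add: cong_modulus_iff)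
qed

lemma crt_indicator_cong_iff:
  "[crt_indicator P = crt_indicator Q] (mod modulus) \<longleftrightarrow> (\<forall>i\<in>I. P i \<longleftrightarrow> Q i)"
proof -
  have "[of_bool (P i) = of_bool (Q i)] (mod p i) \<longleftrightarrow> (P i \<longleftrightarrow> Q i)" if "i \<in> I" for i
    using prime_gt_1_nat[OF prime_p[OF that]] by (auto simp: cong_def)
  then show ?thesis
    unfolding cong_modulus_iff using crt_indicator_cong by (meson cong_sym cong_trans)
qed

end

definition non_edges :: "'v set \<Rightarrow> ('v \<Rightarrow> 'v \<Rightarrow> bool) \<Rightarrow> ('v \<times> 'v) set" where
  "non_edges V E = {(u, v). u \<in> V \<and> v \<in> V \<and> u \<noteq> v \<and> \<not> E u v}"

definition coordinates :: "'v set \<Rightarrow> ('v \<Rightarrow> 'v \<Rightarrow> bool) \<Rightarrow> ('v + 'v \<times> 'v) set" where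
  "coordinates V E = Inl ` V \<union> Inr ` non_edges V E"

definition fst_bit :: "'v + 'v \<times> 'v \<Rightarrow> 'v \<Rightarrow> bool" where
  "fst_bit i u = (case i of Inl w \<Rightarrow> u = w | Inr (a, b) \<Rightarrow> u = a)"

definition snd_bit :: "'v + 'v \<times> 'v \<Rightarrow> 'v \<Rightarrow> bool" where
  "snd_bit i u = (case i of Inl w \<Rightarrow> False | Inr (a, b) \<Rightarrow> u = b)"

lemma finite_coordinates: "finite V \<Longrightarrow> finite (coordinates V E)"
proof -
  assume "finite V"
  moreover have "non_edges V E \<subseteq> V \<times> V" by (auto simp: non_edges_def)
  ultimately show ?thesis
    unfolding coordinates_def by (metis finite_Un finite_imageI finite_SigmaI finite_subset)
qed

lemma bits_disjoint_if_edge: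
  assumes "simple_graph V E" "E u v" "i \<in> coordinates V E"
  shows "\<not> ((fst_bit i u \<or> snd_bit i u) \<and> (fst_bit i v \<or> snd_bit i v))"
  using assms unfolding simple_graph_def coordinates_def non_edges_def fst_bit_def snd_bit_def
  by fastforce

locale enh_power_graph_embedding = prime_residues "coordinates V E" p
  for V :: "'v set" and E :: "'v \<Rightarrow> 'v \<Rightarrow> bool" and p :: "'v + 'v \<times> 'v \<Rightarrow> nat" +
  assumes simple: "simple_graph V E"
begin

abbreviation fst_code :: "'v \<Rightarrow> nat" where
  "fst_code u \<equiv> crt_indicator (\<lambda>i. fst_bit i u)"

abbreviation snd_code :: "'v \<Rightarrow> nat" where
  "snd_code u \<equiv> crt_indicator (\<lambda>i. snd_bit i u)"

definition vertex_code :: "'v \<Rightarrow> nat" where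
  "vertex_code u = mod_pair modulus (fst_code u) (snd_code u)"

lemma vertex_code_in_carrier: "vertex_code u \<in> carrier (mod_pair_group modulus)"
  by (simp add: vertex_code_def mod_pair_group_simps mod_pair_less modulus_pos)

lemma inj_on_vertex_code: "inj_on vertex_code V"
proof (rule inj_onI)
  fix u v assume "u \<in> V" "v \<in> V" "vertex_code u = vertex_code v"
  then have "[fst_code u = fst_code v] (mod modulus)"
    by (simp add: vertex_code_def mod_pair_eq_iff modulus_pos)
  moreover have "Inl u \<in> coordinates V E"
    using \<open>u \<in> V\<close> by (simp add: coordinates_def)
  ultimately show "u = v"
    by (force simp: crt_indicator_cong_iff fst_bit_def)
qed

lemma enh_power_adj_if_edge:
  assumes "E u v"
  shows "enh_power_adj (mod_pair_group modulus) (vertex_code u) (vertex_code v)"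
proof -
  have "u \<in> V" "v \<in> V" "u \<noteq> v"
    using simple assms by (auto simp: simple_graph_def)
  then have "vertex_code u \<noteq> vertex_code v"
    using inj_on_vertex_code by (auto dest: inj_onD)
  define k where "k = crt_indicator (\<lambda>i. fst_bit i u \<or> snd_bit i u)"
  have "[k * fst_code u = fst_code u] (mod modulus)" "[k * snd_code u = snd_code u] (mod modulus)"
    unfolding k_def by (auto intro: crt_indicator_mult)
  moreover have "[k * fst_code v = 0] (mod modulus)" "[k * snd_code v = 0] (mod modulus)"
    unfolding k_def using bits_disjoint_if_edge[OF simple assms]
    by (auto intro!: crt_indicator_mult_eq_0)
  ultimately have "cyclic_group (subgroup_generated (mod_pair_group modulus)
                                  {vertex_code u, vertex_code v})"
    unfolding vertex_code_def by (intro cyclic_mod_pairI modulus_pos)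
  then show ?thesis
    using \<open>vertex_code u \<noteq> vertex_code v\<close> vertex_code_in_carrier
    by (simp add: enh_power_adj_def)
qed

lemma edge_if_enh_power_adj:
  assumes "u \<in> V" "v \<in> V" "enh_power_adj (mod_pair_group modulus) (vertex_code u) (vertex_code v)"
  shows "E u v"
proof (rule ccontr)
  assume "\<not> E u v"
  moreover have "u \<noteq> v"
    using assms(3) by (auto simp: enh_power_adj_def)
  ultimately have i: "Inr (u, v) \<in> coordinates V E"
    using assms(1,2) by (simp add: coordinates_def non_edges_def)
  have "[fst_code u * snd_code v = fst_code v * snd_code u] (mod modulus)"
    using assms(3) cyclic_mod_pair_imp_cong[OF modulus_pos]
    by (simp add: enh_power_adj_def vertex_code_def)
  then have det: "[fst_code u * snd_code v = fst_code v * snd_code u] (mod p (Inr (u, v)))"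
    using i cong_modulus_iff by blast
  have one: "[fst_code u * snd_code v = 1] (mod p (Inr (u, v)))"
    using crt_indicator_mult_cong_prime[OF i, of "\<lambda>i. fst_bit i u" "\<lambda>i. snd_bit i v"]
    by (simp add: fst_bit_def snd_bit_def)
  have zero: "[fst_code v * snd_code u = 0] (mod p (Inr (u, v)))"
    using crt_indicator_mult_cong_prime[OF i, of "\<lambda>i. fst_bit i v" "\<lambda>i. snd_bit i u"] \<open>u \<noteq> v\<close>
    by (simp add: fst_bit_def snd_bit_def)
  have "[1 = 0] (mod p (Inr (u, v)))"
    using cong_trans[OF cong_trans[OF cong_sym[OF one] det] zero] .
  then show False
    using prime_gt_1_nat[OF prime_p[OF i]] by (simp add: cong_def)
qed

lemma induced_subgraph_of_enh_power_graph_mod_pair_group: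
  "induced_subgraph_of_enh_power_graph V E (mod_pair_group modulus)"
  unfolding induced_subgraph_of_enh_power_graph_def
  using vertex_code_in_carrier inj_on_vertex_code enh_power_adj_if_edge edge_if_enh_power_adj
  by (intro exI[of _ vertex_code]) blast

end

theorem mainTheorem10:
  fixes V :: "'v set" and E :: "'v \<Rightarrow> 'v \<Rightarrow> bool"
  assumes "finite V" and "simple_graph V E"
  shows "\<exists>G :: nat monoid. group G \<and> comm_group G \<and> finite (carrier G) \<and>
           induced_subgraph_of_enh_power_graph V E G"
proof -
  have fin: "finite (coordinates V E)"
    using assms(1) by (rule finite_coordinates)
  obtain p :: "'v + 'v \<times> 'v \<Rightarrow> nat"
    where "inj_on p (coordinates V E)" "\<forall>i \<in> coordinates V E. prime (p i)"
    using ex_inj_on_prime[OF fin] by blast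
  then interpret enh_power_graph_embedding V E p
    using fin assms(2) by unfold_locales auto
  have "comm_group (mod_pair_group modulus)"
    using modulus_pos by (rule comm_group_mod_pair_group)
  then show ?thesis
    using induced_subgraph_of_enh_power_graph_mod_pair_group
    by (intro exI[of _ "mod_pair_group modulus"]) (simp add: comm_group.axioms(2) mod_pair_group_simps)
qed

end
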